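(* Let $h_1,\dots,h_p$ be bilinear forms on $V$. Then $$c(h_1\cdots h_p)=\sum_i(c\,h_i)\,h_1\cdots\hat h_i\cdots h_p-\sum_{i<j}(h_j\circ h_i+h_i\circ h_j)\,h_1\cdots\hat h_i\cdots\hat h_j\cdots h_p,$$ where a hat denotes omission. In particular, for a bilinear form $k$ on $V$, $$c\,k^p=p\,(c\,k)\,k^{p-1}-p(p-1)(k\circ k)\,k^{p-2}.$$
   Context: $(V,g)$ is a Euclidean real vector space of dimension $n$ with orthonormal basis $(e_i)$, identified with $V^*$ via $g$. Double forms: elements of $\bigoplus_{p,q}\Lambda^pV^*\otimes\Lambda^qV^*$, a $(p,q)$ double form viewed as a multilinear form $\omega(x_1,\dots,x_p;y_1,\dots,y_q)$ skew in the $x$'s and in the $y$'s; bilinear forms on $V$ are $(1,1)$ double forms. Exterior product: $(\theta_1\otimes\theta_2)(\theta_3\otimes\theta_4)=(\theta_1\wedge\theta_3)\otimes(\theta_2\wedge\theta_4)$, extended bilinearly ($k^0=1$). Composition product: $(\theta_1\otimes\theta_2)\circ(\theta_3\otimes\theta_4)=\langle\theta_1,\theta_4\rangle\theta_3\otimes\theta_2$, extended bilinearly (for bilinear forms this corresponds to composition of the associated endomorphisms). The contraction $c$ is $c\omega(x_1,\dots,x_{p-1};y_1,\dots,y_{q-1})=\sum_j\omega(e_j,x_1,\dots,x_{p-1};e_j,y_1,\dots,y_{q-1})$ ($c\omega=0$ if $p=0$ or $q=0$); for a bilinear form $h$, $c\,h$ is its trace. *)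

theory Defs
  imports "HOL-Analysis.Analysis"
begin

text \<open>A (p,q) double form on V is represented as a function of two lists of
vectors, meant to be evaluated on lists of lengths p and q (values on lists of
other lengths are irrelevant).\<close>

type_synonym 'v dform = "'v list \<Rightarrow> 'v list \<Rightarrow> real"

text \<open>Exterior product of a (p1,q1) double form with a (p2,q2) double form
(determinant convention: the product of 1-forms is their wedge with
(a \<and> b)(x,y) = a x b y - a y b x).  Written with the full antisymmetrization,
normalized by factorials (equal to the shuffle sum for skew forms).\<close>

definition dprod :: "nat \<Rightarrow> nat \<Rightarrow> 'v dform \<Rightarrow> 'v dform \<Rightarrow> 'v dform" where
  "dprod p1 q1 \<omega> \<theta> xs ys =
     (\<Sum>\<sigma>\<in>{\<sigma>. \<sigma> permutes {..<length xs}}. \<Sum>\<tau>\<in>{\<tau>. \<tau> permutes {..<length ys}}.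
        of_int (sign \<sigma> * sign \<tau>) *
        \<omega> (take p1 (permute_list \<sigma> xs)) (take q1 (permute_list \<tau> ys)) *
        \<theta> (drop p1 (permute_list \<sigma> xs)) (drop q1 (permute_list \<tau> ys)))
     / (fact p1 * fact (length xs - p1) * fact q1 * fact (length ys - q1))"

definition bf :: "('v \<Rightarrow> 'v \<Rightarrow> real) \<Rightarrow> 'v dform" where
  "bf h xs ys = h (xs ! 0) (ys ! 0)"

fun bprod :: "('v \<Rightarrow> 'v \<Rightarrow> real) list \<Rightarrow> 'v dform" where
  "bprod [] = (\<lambda>xs ys. 1)"
| "bprod (h # hs) = dprod 1 1 (bf h) (bprod hs)"

definition contr :: "nat \<Rightarrow> nat \<Rightarrow> ('v::euclidean_space) dform \<Rightarrow> 'v dform" where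
  "contr p q \<omega> xs ys =
     (if p = 0 \<or> q = 0 then 0 else (\<Sum>e\<in>Basis. \<omega> (e # xs) (e # ys)))"

definition btrace :: "(('v::euclidean_space) \<Rightarrow> 'v \<Rightarrow> real) \<Rightarrow> real" where
  "btrace h = (\<Sum>e\<in>Basis. h e e)"

text \<open>Composition product of bilinear forms:
(t1 \<otimes> t2) \<circ> (t3 \<otimes> t4) = <t1,t4> t3 \<otimes> t2, i.e.
(h \<circ> k)(x,y) = sum_j k(x,e_j) h(e_j,y).\<close>
definition bcomp :: "(('v::euclidean_space) \<Rightarrow> 'v \<Rightarrow> real) \<Rightarrow> ('v \<Rightarrow> 'v \<Rightarrow> real) \<Rightarrow> 'v \<Rightarrow> 'v \<Rightarrow> real" where
  "bcomp h k x y = (\<Sum>e\<in>Basis. k x e * h e y)"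

end

theory Submission
  imports Defs
begin

text \<open>Thanks to the factorial normalisation of \<open>dprod\<close>, the product \<open>h\<^sub>1 \<cdots> h\<^sub>p\<close> evaluated at
  \<open>(x\<^sub>1, \<dots>, x\<^sub>p; y\<^sub>1, \<dots>, y\<^sub>p)\<close> is a mixed determinant, which admits cofactor expansion along
  any form and along any vector.  Contract in the first slot on both sides and expand \<open>h\<^sub>1\<close>
  along the inserted basis vector \<open>e\<close>: the term \<open>h\<^sub>1(e, e)\<close> sums to the trace of \<open>h\<^sub>1\<close>; the
  terms pairing \<open>e\<close> once with \<open>h\<^sub>1\<close> and once with another form \<open>h\<^sub>j\<close> sum over the basis to
  \<open>h\<^sub>1 \<circ> h\<^sub>j\<close> and \<open>h\<^sub>j \<circ> h\<^sub>1\<close>; the remaining terms are \<open>h\<^sub>1\<close> times contractions of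
  \<open>h\<^sub>2 \<cdots> h\<^sub>p\<close>, handled by induction.  For \<open>k\<^sup>p\<close> there are \<open>p\<close> indices \<open>i\<close> and \<open>p(p-1)/2\<close>
  pairs \<open>i < j\<close>, each contributing \<open>2 (k \<circ> k) k\<^sup>p\<^sup>-\<^sup>2\<close>.\<close>

fun del_nth :: "nat \<Rightarrow> 'a list \<Rightarrow> 'a list" where
  "del_nth _ [] = []"
| "del_nth 0 (x # xs) = xs"
| "del_nth (Suc n) (x # xs) = x # del_nth n xs"

lemma length_del_nth [simp]:
  "length (del_nth i xs) = (if i < length xs then length xs - 1 else length xs)"
  by (induction i xs rule: del_nth.induct) auto

lemma nth_del_nth:
  "i < length xs \<Longrightarrow> k < length xs - 1 \<Longrightarrow> del_nth i xs ! k = xs ! (if k < i then k else Suc k)"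
proof (induction i xs arbitrary: k rule: del_nth.induct)
  case (3 n x xs)
  then show ?case by (cases k) auto
qed auto

lemma del_nth_map: "del_nth i (map f xs) = map f (del_nth i xs)"
  by (induction i xs rule: del_nth.induct) auto

lemma del_nth_replicate: "i < m \<Longrightarrow> del_nth i (replicate m x) = replicate (m - 1) x"
proof (induction m arbitrary: i)
  case (Suc m)
  then show ?case by (cases i; cases m) auto
qed simp

lemma nths_Compl_singleton: "nths xs (- {i}) = del_nth i xs"
proof (induction xs arbitrary: i)
  case (Cons x xs)
  show ?case
  proof (cases i)
    case 0
    have "{k. Suc k \<in> - {0::nat}} = UNIV" by auto
    then show ?thesis using 0 by (simp add: nths_Cons nths_all)
  next
    case (Suc i')
    have "{k. Suc k \<in> - {Suc i'}} = - {i'}" by auto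
    then show ?thesis using Suc Cons.IH by (simp add: nths_Cons)
  qed
qed simp

lemma nths_Compl_pair: "i < j \<Longrightarrow> nths xs (- {i, j}) = del_nth i (del_nth j xs)"
proof (induction xs arbitrary: i j)
  case (Cons x xs)
  obtain j' where j: "j = Suc j'" using Cons.prems by (cases j) auto
  show ?case
  proof (cases i)
    case 0
    have "{k. Suc k \<in> - {0, Suc j'}} = - {j'}" by auto
    then show ?thesis using 0 j by (simp add: nths_Cons nths_Compl_singleton)
  next
    case (Suc i')
    have "{k. Suc k \<in> - {Suc i', Suc j'}} = - {i', j'}" by auto
    then show ?thesis using Suc j Cons.IH[of i' j'] Cons.prems by (simp add: nths_Cons)
  qed
qed simp

section \<open>Mixed determinants of bilinear forms\<close>

text \<open>\<open>(-1)^(a + c)\<close> is the sign of moving the \<open>a\<close>-th entry, and then the \<open>c\<close>-th of the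
  remaining ones, to the front.\<close>

definition alt_pair_sum :: "'a list \<Rightarrow> ('a \<Rightarrow> 'a \<Rightarrow> 'a list \<Rightarrow> real) \<Rightarrow> real" where
  "alt_pair_sum xs G =
     (\<Sum>a<length xs. \<Sum>c<length xs - 1.
        (-1)^(a + c) * G (xs ! a) (del_nth a xs ! c) (del_nth c (del_nth a xs)))"

lemma alt_pair_sum_Nil: "alt_pair_sum [] G = 0"
  by (simp add: alt_pair_sum_def)

lemma alt_pair_sum_Cons:
  "alt_pair_sum (x # xs) G =
     (\<Sum>c<length xs. (-1)^c * G x (xs ! c) (del_nth c xs))
   - (\<Sum>a<length xs. (-1)^a * G (xs ! a) x (del_nth a xs))
   + alt_pair_sum xs (\<lambda>u v R. G u v (x # R))"
proof (cases xs)
  case Nil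
  then show ?thesis by (simp add: alt_pair_sum_def)
next
  case (Cons y ys)
  define n where "n = length ys"
  have len: "length xs = Suc n" using Cons n_def by simp
  have split_first: "(\<Sum>c<Suc n. (-1)^(Suc a + c) * G (xs ! a) (del_nth (Suc a) (x # xs) ! c)
                  (del_nth c (del_nth (Suc a) (x # xs))))
      = - ((-1)^a * G (xs ! a) x (del_nth a xs))
        + (\<Sum>c<n. (-1)^(a + c) * G (xs ! a) (del_nth a xs ! c) (x # del_nth c (del_nth a xs)))"
    for a by (subst sum.lessThan_Suc_shift) simp
  have "alt_pair_sum (x # xs) G =
      (\<Sum>c<Suc n. (-1)^c * G x (xs ! c) (del_nth c xs))
    + (\<Sum>a<Suc n. \<Sum>c<Suc n. (-1)^(Suc a + c) * G (xs ! a) (del_nth (Suc a) (x # xs) ! c)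
                  (del_nth c (del_nth (Suc a) (x # xs))))"
    unfolding alt_pair_sum_def using len by (simp add: sum.lessThan_Suc_shift del: sum.lessThan_Suc)
  also have "\<dots> = (\<Sum>c<Suc n. (-1)^c * G x (xs ! c) (del_nth c xs))
    + (\<Sum>a<Suc n. - ((-1)^a * G (xs ! a) x (del_nth a xs))
        + (\<Sum>c<n. (-1)^(a + c) * G (xs ! a) (del_nth a xs ! c) (x # del_nth c (del_nth a xs))))"
    by (intro arg_cong2[where f = "(+)"] refl sum.cong) (simp_all only: split_first)
  also have "\<dots> = (\<Sum>c<Suc n. (-1)^c * G x (xs ! c) (del_nth c xs))
    - (\<Sum>a<Suc n. (-1)^a * G (xs ! a) x (del_nth a xs)) + alt_pair_sum xs (\<lambda>u v R. G u v (x # R))"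
    unfolding alt_pair_sum_def len by (simp add: sum.distrib sum_subtractf del: sum.lessThan_Suc)
  finally show ?thesis using len by simp
qed

lemma alt_pair_sum_swap_args: "alt_pair_sum xs (\<lambda>u v R. G v u R) = - alt_pair_sum xs G"
proof (induction xs arbitrary: G)
  case Nil
  then show ?case by (simp add: alt_pair_sum_Nil)
next
  case (Cons x xs)
  show ?case
    using Cons.IH[of "\<lambda>u v R. G u v (x # R)"] by (simp add: alt_pair_sum_Cons)
qed

lemma sum_reverse_nesting3:
  "(\<Sum>a\<in>A. \<Sum>b\<in>B. \<Sum>c\<in>C. g a b c) = (\<Sum>c\<in>C. \<Sum>b\<in>B. \<Sum>a\<in>A. g a b c)"
proof -
  have "(\<Sum>a\<in>A. \<Sum>b\<in>B. \<Sum>c\<in>C. g a b c) = (\<Sum>b\<in>B. \<Sum>a\<in>A. \<Sum>c\<in>C. g a b c)"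
    by (rule sum.swap)
  also have "\<dots> = (\<Sum>b\<in>B. \<Sum>c\<in>C. \<Sum>a\<in>A. g a b c)"
    by (rule sum.cong[OF refl], rule sum.swap)
  also have "\<dots> = (\<Sum>c\<in>C. \<Sum>b\<in>B. \<Sum>a\<in>A. g a b c)"
    by (rule sum.swap)
  finally show ?thesis .
qed

text \<open>The mixed determinant \<open>\<Sum>\<sigma> \<tau>. sign \<sigma> * sign \<tau> * \<Prod>i. h\<^sub>i (x\<^sub>\<sigma>\<^sub>i) (y\<^sub>\<tau>\<^sub>i)\<close>, computed by
  cofactor expansion along the first form; it vanishes unless both lists have length \<open>p\<close>.\<close>

fun mixed_det :: "('v \<Rightarrow> 'v \<Rightarrow> real) list \<Rightarrow> 'v list \<Rightarrow> 'v list \<Rightarrow> real" where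
  "mixed_det [] xs ys = (if xs = [] \<and> ys = [] then 1 else 0)"
| "mixed_det (h # hs) xs ys =
     (\<Sum>a<length xs. \<Sum>b<length ys.
        (-1)^(a + b) * h (xs ! a) (ys ! b) * mixed_det hs (del_nth a xs) (del_nth b ys))"

lemma mixed_det_transpose: "mixed_det hs xs ys = mixed_det (map (\<lambda>h x y. h y x) hs) ys xs"
proof (induction hs arbitrary: xs ys)
  case (Cons h hs)
  show ?case by (simp add: Cons.IH sum.swap[of _ "{..<length xs}"] add.commute mult.commute)
qed auto

text \<open>Besides the cofactors of \<open>h\<close>, expanding \<open>h # hs\<close> produces double sums over pairs of
  \<open>xs\<close>-positions, which cancel in pairs because \<open>alt_pair_sum\<close> is antisymmetric in its two
  distinguished arguments.\<close>

lemma mixed_det_Cons_right: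
  "mixed_det hs xs (w # zs) =
     (\<Sum>j<length hs. \<Sum>a<length xs.
        (-1)^a * (hs ! j) (xs ! a) w * mixed_det (del_nth j hs) (del_nth a xs) zs)"
proof (induction hs arbitrary: xs zs)
  case Nil
  then show ?case by simp
next
  case (Cons h hs)
  define n where "n = length xs"
  define m where "m = length zs"
  define q where "q = length hs"
  define G where "G j b = (\<lambda>u v R. h u (zs ! b) * (hs ! j) v w * mixed_det (del_nth j hs) R (del_nth b zs))"
    for j b
  have expand_h: "mixed_det (h # hs) xs (w # zs) =
       (\<Sum>a<n. (-1)^a * h (xs ! a) w * mixed_det hs (del_nth a xs) zs)
     + (\<Sum>a<n. \<Sum>b<m. (-1)^(a + Suc b) * h (xs ! a) (zs ! b) * mixed_det hs (del_nth a xs) (w # del_nth b zs))"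
    by (simp add: n_def m_def sum.lessThan_Suc_shift sum.distrib del: sum.lessThan_Suc)
  have "(\<Sum>a<n. \<Sum>b<m. (-1)^(a + Suc b) * h (xs ! a) (zs ! b) * mixed_det hs (del_nth a xs) (w # del_nth b zs))
     = (\<Sum>a<n. \<Sum>b<m. \<Sum>j<q. - ((-1)^b) *
          (\<Sum>c<n - 1. (-1)^(a + c) * G j b (xs ! a) (del_nth a xs ! c) (del_nth c (del_nth a xs))))"
  proof (intro sum.cong refl)
    fix a b assume "a \<in> {..<n}"
    then have "length (del_nth a xs) = n - 1" using n_def by simp
    then show "(-1)^(a + Suc b) * h (xs ! a) (zs ! b) * mixed_det hs (del_nth a xs) (w # del_nth b zs)
      = (\<Sum>j<q. - ((-1)^b) *
          (\<Sum>c<n - 1. (-1)^(a + c) * G j b (xs ! a) (del_nth a xs ! c) (del_nth c (del_nth a xs))))"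
      unfolding Cons.IH G_def q_def by (simp add: sum_distrib_left power_add mult_ac)
  qed
  also have "\<dots> = (\<Sum>j<q. \<Sum>b<m. - ((-1)^b) * alt_pair_sum xs (G j b))"
    unfolding alt_pair_sum_def n_def[symmetric]
    by (subst sum_reverse_nesting3) (simp add: sum_distrib_left)
  finally have pairs_h: "(\<Sum>a<n. \<Sum>b<m. (-1)^(a + Suc b) * h (xs ! a) (zs ! b) * mixed_det hs (del_nth a xs) (w # del_nth b zs))
     = (\<Sum>j<q. \<Sum>b<m. - ((-1)^b) * alt_pair_sum xs (G j b))" .
  have "(\<Sum>j<q. \<Sum>a<n. (-1)^a * (hs ! j) (xs ! a) w * mixed_det (h # del_nth j hs) (del_nth a xs) zs)
     = (\<Sum>j<q. \<Sum>a<n. \<Sum>b<m. (-1)^b *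
          (\<Sum>c<n - 1. (-1)^(a + c) * G j b (del_nth a xs ! c) (xs ! a) (del_nth c (del_nth a xs))))"
  proof (intro sum.cong refl)
    fix j a assume "a \<in> {..<n}"
    then have "length (del_nth a xs) = n - 1" using n_def by simp
    then show "(-1)^a * (hs ! j) (xs ! a) w * mixed_det (h # del_nth j hs) (del_nth a xs) zs
      = (\<Sum>b<m. (-1)^b *
          (\<Sum>c<n - 1. (-1)^(a + c) * G j b (del_nth a xs ! c) (xs ! a) (del_nth c (del_nth a xs))))"
      unfolding mixed_det.simps G_def m_def
      by (simp add: sum_distrib_left power_add mult_ac) (rule trans[OF sum.swap], simp only: mult.left_commute)
  qed
  also have "\<dots> = (\<Sum>j<q. \<Sum>b<m. (-1)^b * alt_pair_sum xs (\<lambda>u v R. G j b v u R))"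
    unfolding alt_pair_sum_def n_def[symmetric]
    by (rule sum.cong[OF refl], rule trans[OF sum.swap], simp add: sum_distrib_left)
  also have "\<dots> = (\<Sum>j<q. \<Sum>b<m. - ((-1)^b) * alt_pair_sum xs (G j b))"
    by (simp add: alt_pair_sum_swap_args[of xs "G j b" for j b])
  finally have pairs_hs: "(\<Sum>j<q. \<Sum>a<n. (-1)^a * (hs ! j) (xs ! a) w * mixed_det (h # del_nth j hs) (del_nth a xs) zs)
     = (\<Sum>j<q. \<Sum>b<m. - ((-1)^b) * alt_pair_sum xs (G j b))" .
  show ?case
    unfolding expand_h pairs_h using pairs_hs
    by (simp add: n_def q_def sum.lessThan_Suc_shift del: sum.lessThan_Suc)
qed

lemma mixed_det_Cons_left:
  "mixed_det hs (w # zs) ys =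
     (\<Sum>j<length hs. \<Sum>b<length ys.
        (-1)^b * (hs ! j) w (ys ! b) * mixed_det (del_nth j hs) zs (del_nth b ys))"
proof -
  have "mixed_det hs (w # zs) ys = mixed_det (map (\<lambda>h x y. h y x) hs) ys (w # zs)"
    by (rule mixed_det_transpose)
  also have "\<dots> = (\<Sum>j<length hs. \<Sum>b<length ys.
      (-1)^b * (hs ! j) w (ys ! b) * mixed_det (map (\<lambda>h x y. h y x) (del_nth j hs)) (del_nth b ys) zs)"
    by (simp add: mixed_det_Cons_right del_nth_map)
  also have "\<dots> = (\<Sum>j<length hs. \<Sum>b<length ys.
      (-1)^b * (hs ! j) w (ys ! b) * mixed_det (del_nth j hs) zs (del_nth b ys))"
    by (simp add: mixed_det_transpose[of "del_nth j hs" zs for j, symmetric])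
  finally show ?thesis .
qed

lemma mixed_det_Cons_Cons:
  "mixed_det (g # h # r) xs ys =
     alt_pair_sum xs (\<lambda>u v R. alt_pair_sum ys (\<lambda>u' v' R'. g u u' * h v v' * mixed_det r R R'))"
proof -
  define n where "n = length xs"
  define p where "p = length ys"
  define M where "M a b c d = g (xs ! a) (ys ! b) * h (del_nth a xs ! c) (del_nth b ys ! d)
    * mixed_det r (del_nth c (del_nth a xs)) (del_nth d (del_nth b ys))" for a b c d
  have "mixed_det (g # h # r) xs ys =
      (\<Sum>a<n. \<Sum>b<p. \<Sum>c<n - 1. (-1)^(a + c) * (\<Sum>d<p - 1. (-1)^(b + d) * M a b c d))"
    unfolding n_def p_def mixed_det.simps(2) M_def
    by (intro sum.cong refl) (auto simp: sum_distrib_left power_add mult_ac)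
  also have "\<dots> = (\<Sum>a<n. \<Sum>c<n - 1. \<Sum>b<p. (-1)^(a + c) * (\<Sum>d<p - 1. (-1)^(b + d) * M a b c d))"
    by (rule sum.cong[OF refl], rule sum.swap)
  also have "\<dots> = alt_pair_sum xs (\<lambda>u v R. alt_pair_sum ys (\<lambda>u' v' R'. g u u' * h v v' * mixed_det r R R'))"
    unfolding alt_pair_sum_def n_def p_def M_def by (simp add: sum_distrib_left)
  finally show ?thesis .
qed

lemma mixed_det_swap: "mixed_det (g # h # r) xs ys = mixed_det (h # g # r) xs ys"
proof -
  have "mixed_det (g # h # r) xs ys =
      - alt_pair_sum xs (\<lambda>u v R. alt_pair_sum ys (\<lambda>u' v' R'. g v u' * h u v' * mixed_det r R R'))"
    unfolding mixed_det_Cons_Cons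
    using alt_pair_sum_swap_args[of xs "\<lambda>u v R. alt_pair_sum ys (\<lambda>u' v' R'. g u u' * h v v' * mixed_det r R R')"]
    by simp
  also have "\<dots> = alt_pair_sum xs (\<lambda>u v R. alt_pair_sum ys (\<lambda>u' v' R'. h u u' * g v v' * mixed_det r R R'))"
  proof -
    have "alt_pair_sum ys (\<lambda>u' v' R'. g v u' * h u v' * mixed_det r R R')
        = - alt_pair_sum ys (\<lambda>u' v' R'. h u u' * g v v' * mixed_det r R R')" for u v R
      using alt_pair_sum_swap_args[of ys "\<lambda>u' v' R'. h u u' * g v v' * mixed_det r R R'"]
      by (simp add: mult_ac)
    then show ?thesis by (simp add: alt_pair_sum_def sum_negf)
  qed
  also have "\<dots> = mixed_det (h # g # r) xs ys"
    unfolding mixed_det_Cons_Cons ..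
  finally show ?thesis .
qed

lemma mixed_det_add:
  "mixed_det ((\<lambda>x y. g x y + h x y) # r) xs ys = mixed_det (g # r) xs ys + mixed_det (h # r) xs ys"
  by (simp add: sum.distrib[symmetric] algebra_simps)

section \<open>Contraction of a mixed determinant\<close>

lemma sum_nested_mult_sum:
  fixes c :: "'a \<Rightarrow> 'b \<Rightarrow> 'c::semiring_0"
  shows "(\<Sum>a\<in>A. \<Sum>b\<in>B. c a b * (\<Sum>i\<in>I. f i a b)) = (\<Sum>i\<in>I. \<Sum>a\<in>A. \<Sum>b\<in>B. c a b * f i a b)"
proof -
  have "(\<Sum>a\<in>A. \<Sum>b\<in>B. c a b * (\<Sum>i\<in>I. f i a b)) = (\<Sum>a\<in>A. \<Sum>b\<in>B. \<Sum>i\<in>I. c a b * f i a b)"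
    by (simp add: sum_distrib_left)
  also have "\<dots> = (\<Sum>i\<in>I. \<Sum>b\<in>B. \<Sum>a\<in>A. c a b * f i a b)"
    by (rule sum_reverse_nesting3)
  also have "\<dots> = (\<Sum>i\<in>I. \<Sum>a\<in>A. \<Sum>b\<in>B. c a b * f i a b)"
    by (rule sum.cong[OF refl], rule sum.swap)
  finally show ?thesis .
qed

lemma mixed_det_bcomp:
  "mixed_det (bcomp h k # r) xs ys =
     (\<Sum>e\<in>Basis. \<Sum>a<length xs. \<Sum>b<length ys.
        (-1)^(a + b) * (k (xs ! a) e * h e (ys ! b)) * mixed_det r (del_nth a xs) (del_nth b ys))"
proof -
  have "mixed_det (bcomp h k # r) xs ys =
      (\<Sum>a<length xs. \<Sum>b<length ys. \<Sum>e\<in>Basis.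
        (-1)^(a + b) * (k (xs ! a) e * h e (ys ! b)) * mixed_det r (del_nth a xs) (del_nth b ys))"
    by (simp add: bcomp_def sum_distrib_left sum_distrib_right mult_ac)
  also have "\<dots> = (\<Sum>e\<in>Basis. \<Sum>b<length ys. \<Sum>a<length xs.
      (-1)^(a + b) * (k (xs ! a) e * h e (ys ! b)) * mixed_det r (del_nth a xs) (del_nth b ys))"
    by (rule sum_reverse_nesting3)
  also have "\<dots> = (\<Sum>e\<in>Basis. \<Sum>a<length xs. \<Sum>b<length ys.
      (-1)^(a + b) * (k (xs ! a) e * h e (ys ! b)) * mixed_det r (del_nth a xs) (del_nth b ys))"
    by (rule sum.cong[OF refl], rule sum.swap)
  finally show ?thesis .
qed

lemma mixed_det_Cons_Cons_same:
  "mixed_det (h # r) (e # xs) (e # ys) =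
     h e e * mixed_det r xs ys
   - (\<Sum>b<length ys. (-1)^b * h e (ys ! b) * mixed_det r xs (e # del_nth b ys))
   - (\<Sum>a<length xs. (-1)^a * h (xs ! a) e * mixed_det r (e # del_nth a xs) ys)
   + (\<Sum>a<length xs. \<Sum>b<length ys.
        (-1)^(a + b) * h (xs ! a) (ys ! b) * mixed_det r (e # del_nth a xs) (e # del_nth b ys))"
  by (simp add: sum.lessThan_Suc_shift sum.distrib sum_subtractf sum_negf del: sum.lessThan_Suc)

lemma contr_mixed_det_Cons_right:
  "(\<Sum>e\<in>Basis. \<Sum>b<length ys. (-1)^b * h e (ys ! b) * mixed_det r xs (e # del_nth b ys))
   = (\<Sum>j<length r. mixed_det (bcomp h (r ! j) # del_nth j r) xs ys)"
proof -
  have "(\<Sum>e\<in>Basis. \<Sum>b<length ys. (-1)^b * h e (ys ! b) * mixed_det r xs (e # del_nth b ys))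
     = (\<Sum>e\<in>Basis. \<Sum>b<length ys. ((-1)^b * h e (ys ! b)) * (\<Sum>j<length r. \<Sum>a<length xs.
          (-1)^a * (r ! j) (xs ! a) e * mixed_det (del_nth j r) (del_nth a xs) (del_nth b ys)))"
    by (simp add: mixed_det_Cons_right)
  also have "\<dots> = (\<Sum>j<length r. \<Sum>e\<in>Basis. \<Sum>b<length ys. ((-1)^b * h e (ys ! b)) * (\<Sum>a<length xs.
          (-1)^a * (r ! j) (xs ! a) e * mixed_det (del_nth j r) (del_nth a xs) (del_nth b ys)))"
    by (rule sum_nested_mult_sum)
  also have "\<dots> = (\<Sum>j<length r. mixed_det (bcomp h (r ! j) # del_nth j r) xs ys)"
    unfolding mixed_det_bcomp
    by (rule sum.cong[OF refl], rule sum.cong[OF refl], rule trans[OF _ sum.swap])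
      (simp add: sum_distrib_left power_add mult_ac)
  finally show ?thesis .
qed

lemma contr_mixed_det_Cons_left:
  "(\<Sum>e\<in>Basis. \<Sum>a<length xs. (-1)^a * h (xs ! a) e * mixed_det r (e # del_nth a xs) ys)
   = (\<Sum>j<length r. mixed_det (bcomp (r ! j) h # del_nth j r) xs ys)"
proof -
  have "(\<Sum>e\<in>Basis. \<Sum>a<length xs. (-1)^a * h (xs ! a) e * mixed_det r (e # del_nth a xs) ys)
     = (\<Sum>e\<in>Basis. \<Sum>a<length xs. ((-1)^a * h (xs ! a) e) * (\<Sum>j<length r. \<Sum>b<length ys.
          (-1)^b * (r ! j) e (ys ! b) * mixed_det (del_nth j r) (del_nth a xs) (del_nth b ys)))"
    by (simp add: mixed_det_Cons_left)
  also have "\<dots> = (\<Sum>j<length r. \<Sum>e\<in>Basis. \<Sum>a<length xs. ((-1)^a * h (xs ! a) e) * (\<Sum>b<length ys.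
          (-1)^b * (r ! j) e (ys ! b) * mixed_det (del_nth j r) (del_nth a xs) (del_nth b ys)))"
    by (rule sum_nested_mult_sum)
  also have "\<dots> = (\<Sum>j<length r. mixed_det (bcomp (r ! j) h # del_nth j r) xs ys)"
    unfolding mixed_det_bcomp by (simp add: sum_distrib_left power_add mult_ac)
  finally show ?thesis .
qed

abbreviation bcomp_sym :: "('v::euclidean_space \<Rightarrow> 'v \<Rightarrow> real) \<Rightarrow> ('v \<Rightarrow> 'v \<Rightarrow> real) \<Rightarrow> 'v \<Rightarrow> 'v \<Rightarrow> real"
  where "bcomp_sym h k \<equiv> \<lambda>x y. bcomp h k x y + bcomp k h x y"

lemma contr_mixed_det:
  "(\<Sum>e\<in>Basis. mixed_det hs (e # xs) (e # ys)) =
     (\<Sum>i<length hs. btrace (hs ! i) * mixed_det (del_nth i hs) xs ys)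
   - (\<Sum>j<length hs. \<Sum>i<j. mixed_det (bcomp_sym (hs ! j) (hs ! i) # del_nth i (del_nth j hs)) xs ys)"
proof (induction hs arbitrary: xs ys)
  case Nil
  then show ?case by simp
next
  case (Cons h r)
  define n where "n = length xs"
  define p where "p = length ys"
  define q where "q = length r"
  define coef where "coef a b = (-1)^(a + b) * h (xs ! a) (ys ! b)" for a b
  define g where "g j i = bcomp_sym (r ! j) (r ! i)" for j i
  have expand_h: "mixed_det (h # R) xs ys = (\<Sum>a<n. \<Sum>b<p. coef a b * mixed_det R (del_nth a xs) (del_nth b ys))"
    for R by (simp add: n_def p_def coef_def)
  have "(\<Sum>e\<in>Basis. \<Sum>a<n. \<Sum>b<p. coef a b * mixed_det r (e # del_nth a xs) (e # del_nth b ys))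
      = (\<Sum>a<n. \<Sum>b<p. coef a b * (\<Sum>e\<in>Basis. mixed_det r (e # del_nth a xs) (e # del_nth b ys)))"
    by (subst sum_reverse_nesting3, subst sum.swap) (simp add: sum_distrib_left)
  also have "\<dots> = (\<Sum>a<n. \<Sum>b<p. coef a b *
         (\<Sum>i<q. btrace (r ! i) * mixed_det (del_nth i r) (del_nth a xs) (del_nth b ys)))
     - (\<Sum>a<n. \<Sum>b<p. coef a b *
         (\<Sum>j<q. \<Sum>i<j. mixed_det (g j i # del_nth i (del_nth j r)) (del_nth a xs) (del_nth b ys)))"
    by (simp add: Cons.IH g_def q_def right_diff_distrib sum_subtractf)
  also have "\<dots> = (\<Sum>i<q. btrace (r ! i) * mixed_det (h # del_nth i r) xs ys)
     - (\<Sum>j<q. \<Sum>i<j. mixed_det (h # g j i # del_nth i (del_nth j r)) xs ys)"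
    unfolding sum_nested_mult_sum expand_h by (simp add: sum_distrib_left mult_ac)
  finally have inner: "(\<Sum>e\<in>Basis. \<Sum>a<n. \<Sum>b<p. coef a b * mixed_det r (e # del_nth a xs) (e # del_nth b ys))
      = (\<Sum>i<q. btrace (r ! i) * mixed_det (h # del_nth i r) xs ys)
      - (\<Sum>j<q. \<Sum>i<j. mixed_det (g j i # h # del_nth i (del_nth j r)) xs ys)"
    by (simp only: mixed_det_swap)
  have "(\<Sum>e\<in>Basis. mixed_det (h # r) (e # xs) (e # ys)) =
      btrace h * mixed_det r xs ys
    - (\<Sum>j<q. mixed_det (bcomp h (r ! j) # del_nth j r) xs ys)
    - (\<Sum>j<q. mixed_det (bcomp (r ! j) h # del_nth j r) xs ys)
    + (\<Sum>e\<in>Basis. \<Sum>a<n. \<Sum>b<p. coef a b * mixed_det r (e # del_nth a xs) (e # del_nth b ys))"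
    unfolding mixed_det_Cons_Cons_same sum.distrib sum_subtractf
      contr_mixed_det_Cons_right contr_mixed_det_Cons_left
    by (simp add: btrace_def sum_distrib_right n_def p_def q_def coef_def)
  also have "\<dots> =
      (\<Sum>i<length (h # r). btrace ((h # r) ! i) * mixed_det (del_nth i (h # r)) xs ys)
    - (\<Sum>j<length (h # r). \<Sum>i<j.
         mixed_det (bcomp_sym ((h # r) ! j) ((h # r) ! i) # del_nth i (del_nth j (h # r))) xs ys)"
    unfolding inner
    by (simp add: q_def g_def mixed_det_add sum.distrib sum.lessThan_Suc_shift
        del: sum.lessThan_Suc mixed_det.simps)
  finally show ?case .
qed

section \<open>Exterior products of bilinear forms as mixed determinants\<close>

definition perm_shift :: "(nat \<Rightarrow> nat) \<Rightarrow> nat \<Rightarrow> nat" where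
  "perm_shift p = (\<lambda>i. if i = 0 then 0 else Suc (p (i - 1)))"

lemma perm_shift_0 [simp]: "perm_shift p 0 = 0"
  and perm_shift_Suc [simp]: "perm_shift p (Suc i) = Suc (p i)"
  by (simp_all add: perm_shift_def)

lemma perm_shift_transpose_comp:
  "perm_shift (Transposition.transpose a b \<circ> p) = Transposition.transpose (Suc a) (Suc b) \<circ> perm_shift p"
  by (auto simp: perm_shift_def fun_eq_iff Transposition.transpose_def)

lemma perm_shift:
  assumes "p permutes {..<m}"
  shows perm_shift_permutes: "perm_shift p permutes {..<Suc m}"
    and sign_perm_shift: "sign (perm_shift p) = sign p"
proof -
  have "perm_shift p permutes {..<Suc m} \<and> sign (perm_shift p) = sign p"
    using assms finite_lessThan
  proof (induction rule: permutes_induct)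
    case id
    have "perm_shift id = id" by (auto simp: perm_shift_def fun_eq_iff)
    then show ?case by (simp only: permutes_id sign_id simp_thms)
  next
    case (swap a b p)
    have "permutation p" "permutation (perm_shift p)"
      using swap.hyps(4) swap.IH permutes_imp_permutation by blast+
    then have "sign (Transposition.transpose (Suc a) (Suc b) \<circ> perm_shift p)
        = sign (Transposition.transpose a b \<circ> p)"
      using swap.IH by (simp add: sign_compose sign_swap_id permutation_swap_id)
    moreover have "Transposition.transpose (Suc a) (Suc b) \<circ> perm_shift p permutes {..<Suc m}"
      using swap by (intro permutes_compose permutes_swap_id) auto
    ultimately show ?case by (simp only: perm_shift_transpose_comp simp_thms)
  qed
  then show "perm_shift p permutes {..<Suc m}" "sign (perm_shift p) = sign p" by auto
qed

fun front_cycle :: "nat \<Rightarrow> nat \<Rightarrow> nat" where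
  "front_cycle 0 = id"
| "front_cycle (Suc a) = Transposition.transpose a (Suc a) \<circ> front_cycle a"

lemma front_cycle_apply: "front_cycle a j = (if j = 0 then a else if j \<le> a then j - 1 else j)"
  by (induction a arbitrary: j) (auto simp: Transposition.transpose_def)

lemma front_cycle:
  assumes "a < Suc m"
  shows front_cycle_permutes: "front_cycle a permutes {..<Suc m}"
    and sign_front_cycle: "sign (front_cycle a) = (-1)^a"
proof -
  have "front_cycle a permutes {..<Suc m} \<and> sign (front_cycle a) = (-1)^a"
    using assms
  proof (induction a)
    case 0
    show ?case by (simp only: front_cycle.simps(1) permutes_id sign_id power_0 simp_thms)
  next
    case (Suc a)
    then have IH: "front_cycle a permutes {..<Suc m}" "sign (front_cycle a) = (-1)^a" by auto
    have "Transposition.transpose a (Suc a) \<circ> front_cycle a permutes {..<Suc m}"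
      using Suc.prems by (intro permutes_compose[OF IH(1)] permutes_swap_id) auto
    moreover have "sign (Transposition.transpose a (Suc a) \<circ> front_cycle a) = (-1)^Suc a"
      using IH permutes_imp_permutation[OF finite_lessThan IH(1)]
      by (simp add: sign_compose permutation_swap_id sign_swap_id)
    ultimately show ?case by (simp only: front_cycle.simps(2) simp_thms)
  qed
  then show "front_cycle a permutes {..<Suc m}" "sign (front_cycle a) = (-1)^a" by auto
qed

lemma sum_permutes_Suc:
  "(\<Sum>\<sigma>\<in>{\<sigma>. \<sigma> permutes {..<Suc m}}. G \<sigma>)
   = (\<Sum>a<Suc m. \<Sum>\<rho>\<in>{\<rho>. \<rho> permutes {..<m}}. G (front_cycle a \<circ> perm_shift \<rho>))"
proof -
  define A where "A = {..<Suc m} \<times> {\<rho>. \<rho> permutes {..<m}}"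
  define \<Phi> where "\<Phi> = (\<lambda>(a::nat, \<rho>). front_cycle a \<circ> perm_shift \<rho>)"
  have inj: "inj_on \<Phi> A"
  proof (rule inj_onI)
    fix u v assume u: "u \<in> A" and v: "v \<in> A" and eq: "\<Phi> u = \<Phi> v"
    obtain a \<rho> where ua: "u = (a, \<rho>)" by (cases u)
    obtain b \<pi> where vb: "v = (b, \<pi>)" by (cases v)
    have "(front_cycle a \<circ> perm_shift \<rho>) 0 = (front_cycle b \<circ> perm_shift \<pi>) 0"
      using eq by (simp add: \<Phi>_def ua vb)
    then have ab: "a = b" by (simp add: front_cycle_apply)
    have "inj (front_cycle a)"
      using u ua A_def front_cycle_permutes permutes_inj by fastforce
    moreover have "(front_cycle a \<circ> perm_shift \<rho>) (Suc i) = (front_cycle a \<circ> perm_shift \<pi>) (Suc i)" for i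
      using eq ab by (simp add: \<Phi>_def ua vb)
    ultimately have "\<rho> i = \<pi> i" for i by (metis comp_apply injD perm_shift_Suc Suc_inject)
    then show "u = v" using ua vb ab by auto
  qed
  have "\<Phi> ` A \<subseteq> {\<sigma>. \<sigma> permutes {..<Suc m}}"
    by (auto simp: A_def \<Phi>_def intro!: permutes_compose front_cycle_permutes perm_shift_permutes)
  moreover have "card A = fact (Suc m)"
    by (simp add: A_def card_cartesian_product card_permutations)
  ultimately have image: "\<Phi> ` A = {\<sigma>. \<sigma> permutes {..<Suc m}}"
    by (intro card_subset_eq) (simp_all add: finite_permutations card_image[OF inj] card_permutations)
  have "(\<Sum>\<sigma>\<in>{\<sigma>. \<sigma> permutes {..<Suc m}}. G \<sigma>) = (\<Sum>u\<in>A. G (\<Phi> u))"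
    unfolding image[symmetric] by (simp add: sum.reindex[OF inj])
  also have "\<dots> = (\<Sum>a<Suc m. \<Sum>\<rho>\<in>{\<rho>. \<rho> permutes {..<m}}. G (front_cycle a \<circ> perm_shift \<rho>))"
    unfolding A_def \<Phi>_def by (simp add: sum.cartesian_product split_def)
  finally show ?thesis .
qed

lemma front_cycle_comp_perm_shift:
  assumes "a < Suc m" and "\<rho> permutes {..<m}" and "length xs = Suc m"
  shows "xs ! (front_cycle a \<circ> perm_shift \<rho>) 0 = xs ! a"
    and "i < m \<Longrightarrow> xs ! (front_cycle a \<circ> perm_shift \<rho>) (Suc i) = del_nth a xs ! \<rho> i"
    and "sign (front_cycle a \<circ> perm_shift \<rho>) = (-1)^a * sign \<rho>"
proof -
  show "xs ! (front_cycle a \<circ> perm_shift \<rho>) 0 = xs ! a"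
    by (simp add: front_cycle_apply)
  show "xs ! (front_cycle a \<circ> perm_shift \<rho>) (Suc i) = del_nth a xs ! \<rho> i" if "i < m"
  proof -
    have "\<rho> i < m" using permutes_in_image[OF assms(2)] that by simp
    then show ?thesis using assms by (simp add: front_cycle_apply nth_del_nth)
  qed
  show "sign (front_cycle a \<circ> perm_shift \<rho>) = (-1)^a * sign \<rho>"
  proof -
    have "permutation (front_cycle a)" "permutation (perm_shift \<rho>)"
      using front_cycle_permutes[OF assms(1)] perm_shift_permutes[OF assms(2)]
        permutes_imp_permutation[OF finite_lessThan] by blast+
    then show ?thesis
      using assms(1,2) by (simp add: sign_compose sign_front_cycle sign_perm_shift)
  qed
qed

definition leibniz_mixed_det :: "('v \<Rightarrow> 'v \<Rightarrow> real) list \<Rightarrow> 'v list \<Rightarrow> 'v list \<Rightarrow> real" where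
  "leibniz_mixed_det hs xs ys =
     (\<Sum>\<sigma>\<in>{\<sigma>. \<sigma> permutes {..<length xs}}. \<Sum>\<tau>\<in>{\<tau>. \<tau> permutes {..<length ys}}.
        of_int (sign \<sigma> * sign \<tau>) * (\<Prod>i<length hs. (hs ! i) (xs ! \<sigma> i) (ys ! \<tau> i)))"

lemma leibniz_mixed_det_Cons:
  assumes lx: "length xs = Suc m" and ly: "length ys = Suc m" and lh: "length hs = m"
  shows "leibniz_mixed_det (h # hs) xs ys =
    (\<Sum>a<Suc m. \<Sum>b<Suc m. (-1)^(a + b) * h (xs ! a) (ys ! b) * leibniz_mixed_det hs (del_nth a xs) (del_nth b ys))"
proof -
  define P where "P = {\<rho>. \<rho> permutes {..<m}}"
  define cyc where "cyc a \<rho> = front_cycle a \<circ> perm_shift \<rho>" for a \<rho>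
  define X where "X a b \<rho> \<pi> = of_int (sign \<rho> * sign \<pi>)
    * (\<Prod>i<m. (hs ! i) (del_nth a xs ! \<rho> i) (del_nth b ys ! \<pi> i))" for a b \<rho> \<pi>
  have "leibniz_mixed_det (h # hs) xs ys = (\<Sum>a<Suc m. \<Sum>\<rho>\<in>P. \<Sum>b<Suc m. \<Sum>\<pi>\<in>P.
     of_int (sign (cyc a \<rho>) * sign (cyc b \<pi>))
     * (\<Prod>i<Suc m. ((h # hs) ! i) (xs ! cyc a \<rho> i) (ys ! cyc b \<pi> i)))"
    unfolding leibniz_mixed_det_def lx ly P_def cyc_def sum_permutes_Suc by (simp only: length_Cons lh)
  also have "\<dots> = (\<Sum>a<Suc m. \<Sum>\<rho>\<in>P. \<Sum>b<Suc m. \<Sum>\<pi>\<in>P. ((-1)^(a + b) * h (xs ! a) (ys ! b)) * X a b \<rho> \<pi>)"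
  proof (intro sum.cong refl)
    fix a \<rho> b \<pi> assume "a \<in> {..<Suc m}" "\<rho> \<in> P" "b \<in> {..<Suc m}" "\<pi> \<in> P"
    then have a: "a < Suc m" and b: "b < Suc m" and \<rho>: "\<rho> permutes {..<m}" and \<pi>: "\<pi> permutes {..<m}"
      by (auto simp: P_def)
    note facts_a = front_cycle_comp_perm_shift[OF a \<rho> lx, folded cyc_def]
    note facts_b = front_cycle_comp_perm_shift[OF b \<pi> ly, folded cyc_def]
    have "(\<Prod>i<Suc m. ((h # hs) ! i) (xs ! cyc a \<rho> i) (ys ! cyc b \<pi> i))
      = h (xs ! a) (ys ! b) * (\<Prod>i<m. (hs ! i) (del_nth a xs ! \<rho> i) (del_nth b ys ! \<pi> i))"
      unfolding prod.lessThan_Suc_shift using facts_a(1,2) facts_b(1,2) by simp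
    then show "of_int (sign (cyc a \<rho>) * sign (cyc b \<pi>))
        * (\<Prod>i<Suc m. ((h # hs) ! i) (xs ! cyc a \<rho> i) (ys ! cyc b \<pi> i))
      = ((-1)^(a + b) * h (xs ! a) (ys ! b)) * X a b \<rho> \<pi>"
      unfolding X_def facts_a(3) facts_b(3) by (simp add: power_add mult_ac)
  qed
  also have "\<dots> = (\<Sum>a<Suc m. \<Sum>b<Suc m. ((-1)^(a + b) * h (xs ! a) (ys ! b)) * (\<Sum>\<rho>\<in>P. \<Sum>\<pi>\<in>P. X a b \<rho> \<pi>))"
    by (rule sum.cong[OF refl], rule trans[OF sum.swap], simp add: sum_distrib_left)
  also have "\<dots> = (\<Sum>a<Suc m. \<Sum>b<Suc m. (-1)^(a + b) * h (xs ! a) (ys ! b) * leibniz_mixed_det hs (del_nth a xs) (del_nth b ys))"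
    by (intro sum.cong refl) (simp add: leibniz_mixed_det_def X_def P_def lx ly lh)
  finally show ?thesis .
qed

lemma leibniz_mixed_det_eq_mixed_det:
  "length xs = length hs \<Longrightarrow> length ys = length hs \<Longrightarrow> leibniz_mixed_det hs xs ys = mixed_det hs xs ys"
proof (induction hs arbitrary: xs ys)
  case Nil
  then show ?case by (simp add: leibniz_mixed_det_def)
next
  case (Cons h hs)
  then have "leibniz_mixed_det (h # hs) xs ys = (\<Sum>a<Suc (length hs). \<Sum>b<Suc (length hs).
      (-1)^(a + b) * h (xs ! a) (ys ! b) * leibniz_mixed_det hs (del_nth a xs) (del_nth b ys))"
    by (intro leibniz_mixed_det_Cons) auto
  also have "\<dots> = mixed_det (h # hs) xs ys"
    using Cons.prems by (simp add: Cons.IH del: sum.lessThan_Suc)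
  finally show ?case .
qed

lemma sum_swap_nested_pairs:
  "(\<Sum>a\<in>A. \<Sum>b\<in>B. \<Sum>c\<in>C. \<Sum>d\<in>D. g a b c d) = (\<Sum>c\<in>C. \<Sum>d\<in>D. \<Sum>a\<in>A. \<Sum>b\<in>B. g a b c d)"
proof -
  have "(\<Sum>a\<in>A. \<Sum>b\<in>B. \<Sum>c\<in>C. \<Sum>d\<in>D. g a b c d) = (\<Sum>a\<in>A. \<Sum>c\<in>C. \<Sum>b\<in>B. \<Sum>d\<in>D. g a b c d)"
    by (rule sum.cong[OF refl], rule sum.swap)
  also have "\<dots> = (\<Sum>c\<in>C. \<Sum>a\<in>A. \<Sum>b\<in>B. \<Sum>d\<in>D. g a b c d)"
    by (rule sum.swap)
  also have "\<dots> = (\<Sum>c\<in>C. \<Sum>a\<in>A. \<Sum>d\<in>D. \<Sum>b\<in>B. g a b c d)"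
    by (rule sum.cong[OF refl], rule sum.cong[OF refl], rule sum.swap)
  also have "\<dots> = (\<Sum>c\<in>C. \<Sum>d\<in>D. \<Sum>a\<in>A. \<Sum>b\<in>B. g a b c d)"
    by (rule sum.cong[OF refl], rule sum.swap)
  finally show ?thesis .
qed

lemma sign_comp_perm_shift:
  assumes "\<sigma> permutes {..<Suc m}" and "\<alpha> permutes {..<m}"
  shows "sign (\<sigma> \<circ> perm_shift \<alpha>) = sign \<sigma> * sign \<alpha>"
proof -
  have "permutation \<sigma>" "permutation (perm_shift \<alpha>)"
    using assms(1) perm_shift_permutes[OF assms(2)] permutes_imp_permutation[OF finite_lessThan] by blast+
  then show ?thesis by (simp add: sign_compose sign_perm_shift[OF assms(2)])
qed

text \<open>Summing over all pairs \<open>\<sigma>, \<tau>\<close> counts every term of the Leibniz formula \<open>(m!)\<^sup>2\<close>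
  times, once for each reordering of the remaining factors.\<close>

lemma leibniz_mixed_det_Cons_average:
  assumes lx: "length xs = Suc m" and ly: "length ys = Suc m" and lh: "length hs = m"
  shows "(\<Sum>\<sigma>\<in>{\<sigma>. \<sigma> permutes {..<Suc m}}. \<Sum>\<tau>\<in>{\<tau>. \<tau> permutes {..<Suc m}}.
            of_int (sign \<sigma> * sign \<tau>) * h (xs ! \<sigma> 0) (ys ! \<tau> 0)
            * leibniz_mixed_det hs (drop 1 (permute_list \<sigma> xs)) (drop 1 (permute_list \<tau> ys)))
         = fact m * fact m * leibniz_mixed_det (h # hs) xs ys"
proof -
  define P where "P = {\<rho>. \<rho> permutes {..<m}}"
  define PS where "PS = {\<rho>. \<rho> permutes {..<Suc m}}"
  define f where "f \<sigma> \<tau> = of_int (sign \<sigma> * sign \<tau>) * (\<Prod>i<Suc m. ((h # hs) ! i) (xs ! \<sigma> i) (ys ! \<tau> i))"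
    for \<sigma> \<tau>
  have summand: "of_int (sign \<sigma> * sign \<tau>) * h (xs ! \<sigma> 0) (ys ! \<tau> 0)
      * leibniz_mixed_det hs (drop 1 (permute_list \<sigma> xs)) (drop 1 (permute_list \<tau> ys))
    = (\<Sum>\<alpha>\<in>P. \<Sum>\<beta>\<in>P. f (\<sigma> \<circ> perm_shift \<alpha>) (\<tau> \<circ> perm_shift \<beta>))"
    if \<sigma>: "\<sigma> \<in> PS" and \<tau>: "\<tau> \<in> PS" for \<sigma> \<tau>
  proof -
    have f_comp: "f (\<sigma> \<circ> perm_shift \<alpha>) (\<tau> \<circ> perm_shift \<beta>) =
        of_int (sign \<sigma> * sign \<tau>) * h (xs ! \<sigma> 0) (ys ! \<tau> 0) * (of_int (sign \<alpha> * sign \<beta>)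
        * (\<Prod>i<m. (hs ! i) (drop 1 (permute_list \<sigma> xs) ! \<alpha> i) (drop 1 (permute_list \<tau> ys) ! \<beta> i)))"
      if "\<alpha> \<in> P" "\<beta> \<in> P" for \<alpha> \<beta>
    proof -
      have "\<alpha> i < m" "\<beta> i < m" if "i < m" for i
        using \<open>\<alpha> \<in> P\<close> \<open>\<beta> \<in> P\<close> that permutes_in_image by (fastforce simp: P_def)+
      then have "(\<Prod>i<m. (hs ! i) (drop 1 (permute_list \<sigma> xs) ! \<alpha> i) (drop 1 (permute_list \<tau> ys) ! \<beta> i))
          = (\<Prod>i<m. (hs ! i) (xs ! \<sigma> (Suc (\<alpha> i))) (ys ! \<tau> (Suc (\<beta> i))))"
        using \<sigma> \<tau> lx ly by (auto simp: PS_def permute_list_nth intro!: prod.cong)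
      then show ?thesis
        using \<sigma> \<tau> that unfolding f_def prod.lessThan_Suc_shift
        by (simp add: sign_comp_perm_shift PS_def P_def mult_ac)
    qed
    show ?thesis
      unfolding leibniz_mixed_det_def using lx ly lh
      by (simp add: f_comp P_def[symmetric] sum_distrib_left cong: sum.cong)
  qed
  have reindex: "(\<Sum>\<sigma>\<in>PS. \<Sum>\<tau>\<in>PS. f (\<sigma> \<circ> perm_shift \<alpha>) (\<tau> \<circ> perm_shift \<beta>)) = leibniz_mixed_det (h # hs) xs ys"
    if "\<alpha> \<in> P" "\<beta> \<in> P" for \<alpha> \<beta>
  proof -
    have \<alpha>: "perm_shift \<alpha> permutes {..<Suc m}" and \<beta>: "perm_shift \<beta> permutes {..<Suc m}"
      using that perm_shift_permutes by (auto simp: P_def)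
    have "(\<Sum>\<sigma>\<in>PS. \<Sum>\<tau>\<in>PS. f (\<sigma> \<circ> perm_shift \<alpha>) (\<tau> \<circ> perm_shift \<beta>))
        = (\<Sum>\<sigma>\<in>PS. \<Sum>\<tau>\<in>PS. f (\<sigma> \<circ> perm_shift \<alpha>) \<tau>)"
      unfolding PS_def by (rule sum.cong[OF refl], rule sum_permutations_compose_right[OF \<beta>, symmetric])
    also have "\<dots> = (\<Sum>\<sigma>\<in>PS. \<Sum>\<tau>\<in>PS. f \<sigma> \<tau>)"
      unfolding PS_def by (rule sum_permutations_compose_right[OF \<alpha>, symmetric])
    also have "\<dots> = leibniz_mixed_det (h # hs) xs ys"
      unfolding leibniz_mixed_det_def f_def PS_def lx ly by (simp only: length_Cons lh)
    finally show ?thesis .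
  qed
  have "(\<Sum>\<sigma>\<in>PS. \<Sum>\<tau>\<in>PS. of_int (sign \<sigma> * sign \<tau>) * h (xs ! \<sigma> 0) (ys ! \<tau> 0)
          * leibniz_mixed_det hs (drop 1 (permute_list \<sigma> xs)) (drop 1 (permute_list \<tau> ys)))
     = (\<Sum>\<sigma>\<in>PS. \<Sum>\<tau>\<in>PS. \<Sum>\<alpha>\<in>P. \<Sum>\<beta>\<in>P. f (\<sigma> \<circ> perm_shift \<alpha>) (\<tau> \<circ> perm_shift \<beta>))"
    by (rule sum.cong[OF refl], rule sum.cong[OF refl], rule summand)
  also have "\<dots> = (\<Sum>\<alpha>\<in>P. \<Sum>\<beta>\<in>P. \<Sum>\<sigma>\<in>PS. \<Sum>\<tau>\<in>PS. f (\<sigma> \<circ> perm_shift \<alpha>) (\<tau> \<circ> perm_shift \<beta>))"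
    by (rule sum_swap_nested_pairs)
  also have "\<dots> = fact m * fact m * leibniz_mixed_det (h # hs) xs ys"
    by (simp add: reindex P_def card_permutations)
  finally show ?thesis
    unfolding PS_def .
qed

lemma bprod_eq_leibniz_mixed_det:
  "length xs = length hs \<Longrightarrow> length ys = length hs \<Longrightarrow> bprod hs xs ys = leibniz_mixed_det hs xs ys"
proof (induction hs arbitrary: xs ys)
  case Nil
  then show ?case by (simp add: leibniz_mixed_det_def)
next
  case (Cons h hs)
  define m where "m = length hs"
  have lx: "length xs = Suc m" and ly: "length ys = Suc m" using Cons.prems m_def by auto
  have "bprod (h # hs) xs ys = (\<Sum>\<sigma>\<in>{\<sigma>. \<sigma> permutes {..<Suc m}}. \<Sum>\<tau>\<in>{\<tau>. \<tau> permutes {..<Suc m}}.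
      of_int (sign \<sigma> * sign \<tau>) * h (xs ! \<sigma> 0) (ys ! \<tau> 0)
      * leibniz_mixed_det hs (drop 1 (permute_list \<sigma> xs)) (drop 1 (permute_list \<tau> ys))) / (fact m * fact m)"
    using lx ly m_def
    by (auto simp: dprod_def bf_def permute_list_nth Cons.IH intro!: sum.cong arg_cong2[where f = "(/)"])
  also have "\<dots> = leibniz_mixed_det (h # hs) xs ys"
    by (subst leibniz_mixed_det_Cons_average[OF lx ly m_def[symmetric]]) simp
  finally show ?case .
qed

lemma bprod_eq_mixed_det:
  "length xs = length hs \<Longrightarrow> length ys = length hs \<Longrightarrow> bprod hs xs ys = mixed_det hs xs ys"
  by (simp add: bprod_eq_leibniz_mixed_det leibniz_mixed_det_eq_mixed_det)

section \<open>The contraction formula\<close>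

lemma contr_bprod:
  assumes "length xs = length hs - 1" and "length ys = length hs - 1"
  shows "contr (length hs) (length hs) (bprod hs) xs ys =
      (\<Sum>i<length hs. btrace (hs ! i) * bprod (nths hs (- {i})) xs ys)
    - (\<Sum>j<length hs. \<Sum>i<j. dprod 1 1 (bf (bcomp_sym (hs ! j) (hs ! i))) (bprod (nths hs (- {i, j}))) xs ys)"
proof (cases "hs = []")
  case True
  then show ?thesis by (simp add: contr_def)
next
  case False
  have "contr (length hs) (length hs) (bprod hs) xs ys = (\<Sum>e\<in>Basis. mixed_det hs (e # xs) (e # ys))"
    using False assms by (simp add: contr_def bprod_eq_mixed_det)
  also have "\<dots> = (\<Sum>i<length hs. btrace (hs ! i) * mixed_det (del_nth i hs) xs ys)
    - (\<Sum>j<length hs. \<Sum>i<j. mixed_det (bcomp_sym (hs ! j) (hs ! i) # del_nth i (del_nth j hs)) xs ys)"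
    by (rule contr_mixed_det)
  also have "(\<Sum>i<length hs. btrace (hs ! i) * mixed_det (del_nth i hs) xs ys)
      = (\<Sum>i<length hs. btrace (hs ! i) * bprod (nths hs (- {i})) xs ys)"
    using assms by (intro sum.cong refl) (simp add: nths_Compl_singleton bprod_eq_mixed_det)
  also have "(\<Sum>j<length hs. \<Sum>i<j. mixed_det (bcomp_sym (hs ! j) (hs ! i) # del_nth i (del_nth j hs)) xs ys)
      = (\<Sum>j<length hs. \<Sum>i<j. dprod 1 1 (bf (bcomp_sym (hs ! j) (hs ! i))) (bprod (nths hs (- {i, j}))) xs ys)"
  proof (intro sum.cong refl)
    fix j i assume "j \<in> {..<length hs}" and "i \<in> {..<j}"
    then have "length (bcomp_sym (hs ! j) (hs ! i) # del_nth i (del_nth j hs)) = length hs - 1"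
      and "nths hs (- {i, j}) = del_nth i (del_nth j hs)"
      by (auto simp: nths_Compl_pair)
    then show "mixed_det (bcomp_sym (hs ! j) (hs ! i) # del_nth i (del_nth j hs)) xs ys
      = dprod 1 1 (bf (bcomp_sym (hs ! j) (hs ! i))) (bprod (nths hs (- {i, j}))) xs ys"
      using assms bprod_eq_mixed_det[of xs "bcomp_sym (hs ! j) (hs ! i) # del_nth i (del_nth j hs)" ys]
      by (simp del: mixed_det.simps)
  qed
  finally show ?thesis .
qed

lemma dprod_bf_scale: "dprod p q (bf (\<lambda>x y. c * g x y)) \<theta> xs ys = c * dprod p q (bf g) \<theta> xs ys"
proof -
  have "A * (c * B) * C = c * (A * B * C)" for A B C :: real by simp
  then show ?thesis
    unfolding dprod_def bf_def by (simp only: sum_distrib_left[symmetric] times_divide_eq_right)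
qed

lemma contr_bprod_replicate:
  assumes "length xs = m - 1" and "length ys = m - 1"
  shows "contr m m (bprod (replicate m k)) xs ys =
      real m * btrace k * bprod (replicate (m - 1) k) xs ys
    - real m * (real m - 1) * dprod 1 1 (bf (bcomp k k)) (bprod (replicate (m - 2) k)) xs ys"
proof -
  define X where "X = dprod 1 1 (bf (bcomp k k)) (bprod (replicate (m - 2) k)) xs ys"
  have "(\<Sum>i<m. btrace (replicate m k ! i) * bprod (nths (replicate m k) (- {i})) xs ys)
      = (\<Sum>i<m. btrace k * bprod (replicate (m - 1) k) xs ys)"
    by (intro sum.cong refl) (simp add: nths_Compl_singleton del_nth_replicate)
  moreover have "(\<Sum>j<m. \<Sum>i<j. dprod 1 1 (bf (bcomp_sym (replicate m k ! j) (replicate m k ! i)))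
        (bprod (nths (replicate m k) (- {i, j}))) xs ys)
      = (\<Sum>j<m. \<Sum>i<j. 2 * X)"
    by (intro sum.cong refl) (simp add: X_def nths_Compl_pair del_nth_replicate dprod_bf_scale numeral_2_eq_2)
  ultimately have "contr m m (bprod (replicate m k)) xs ys =
      (\<Sum>i<m. btrace k * bprod (replicate (m - 1) k) xs ys) - (\<Sum>j<m. \<Sum>i<j. 2 * X)"
    using contr_bprod[of xs "replicate m k" ys] assms by simp
  also have "(\<Sum>j<m. \<Sum>i<j. 2 * X) = real m * (real m - 1) * X"
    by (induction m) (simp_all add: algebra_simps)
  finally show ?thesis
    unfolding X_def by simp
qed

theorem mainTheorem13:
  fixes hs :: "(('v::euclidean_space) \<Rightarrow> 'v \<Rightarrow> real) list"
    and k :: "'v \<Rightarrow> 'v \<Rightarrow> real"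
    and m :: nat
  assumes "\<forall>h\<in>set hs. bilinear h"
    and "bilinear k"
  shows "(\<forall>xs ys. length xs = length hs - 1 \<longrightarrow> length ys = length hs - 1 \<longrightarrow>
            contr (length hs) (length hs) (bprod hs) xs ys =
              (\<Sum>i<length hs. btrace (hs ! i) * bprod (nths hs (- {i})) xs ys)
            - (\<Sum>j<length hs. \<Sum>i<j.
                 dprod 1 1 (bf (\<lambda>x y. bcomp (hs ! j) (hs ! i) x y + bcomp (hs ! i) (hs ! j) x y))
                   (bprod (nths hs (- {i, j}))) xs ys))
       \<and> (\<forall>xs ys. length xs = m - 1 \<longrightarrow> length ys = m - 1 \<longrightarrow>
            contr m m (bprod (replicate m k)) xs ys =
              real m * btrace k * bprod (replicate (m - 1) k) xs ys
            - real m * (real m - 1) * dprod 1 1 (bf (bcomp k k)) (bprod (replicate (m - 2) k)) xs ys)"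
  using contr_bprod contr_bprod_replicate by blast

end
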